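(* Let $\mathbb{C}$ be a generalized 2-category. Let $\alpha\colon \mathrm{id}_{A'}\to\mathrm{id}_A$, $\beta\colon \mathrm{id}_{B'}\to\mathrm{id}_B$ and $\gamma\colon\mathrm{id}_{C'}\to\mathrm{id}_C$ be 2-cells, and let $f\colon A\to B$, $g\colon B\to C$, $f'\colon A'\to B'$, $g'\colon B'\to C'$ be 1-cells. Then there exists at least one 2-cell $$ g{\downarrow_{\beta,\gamma}}\circ f{\downarrow_{\alpha,\beta}} \;\longrightarrow\; (g\circ f){\downarrow_{\alpha,\gamma}}$$ and at least one 2-cell $$ (g'\circ f'){\uparrow^{\alpha,\gamma}} \;\longrightarrow\; g'{\uparrow^{\beta,\gamma}}\circ f'{\uparrow^{\alpha,\beta}}.$$
   Context: A generalized 2-category $\mathbb{C}$ consists of: (i) a category $\mathbb{C}_1$, whose objects are the 0-cells and whose arrows are the 1-cells of $\mathbb{C}$ (composition written $g\circ f$, identities $\mathrm{id}_A$); (ii) a category $\mathbb{C}_v$ whose objects are the 1-cells of $\mathbb{C}$ and whose arrows are called 2-cells; a 2-cell $f\to g$ may exist between non-parallel 1-cells (domains/codomains of $f,g$ in $\mathbb{C}_1$ may differ); composition in $\mathbb{C}_v$ is called vertical composition and written $\circ$; (iii) an associative horizontal composition: for 1-cells $f_1\colon A_1\to B_1$, $f_2\colon B_1\to C_1$, $g_1\colon A_2\to B_2$, $g_2\colon B_2\to C_2$ and 2-cells $\alpha\colon f_1\to g_1$, $\beta\colon f_2\to g_2$, a 2-cell $\beta\star\alpha\colon f_2\circ f_1\to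 g_2\circ g_1$, satisfying the interchange law $(\alpha_2\star\beta_2)\circ(\alpha_1\star\beta_1)=(\alpha_2\circ\alpha_1)\star(\beta_2\circ\beta_1)$ whenever defined; (iv) operations $\nabla$ and $\triangle$: for 2-cells $\alpha\colon\mathrm{id}_{A'}\to\mathrm{id}_A$ and $\beta\colon\mathrm{id}_{B'}\to\mathrm{id}_B$, let $\mathbb{C}_{\alpha,\beta}$ be the subcategory of $\mathbb{C}_v$ whose objects are the 1-cells $A\to B$ and the 1-cells $A'\to B'$, and whose arrows are all 2-cells between 1-cells $A\to B$, all 2-cells between 1-cells $A'\to B'$, and all 2-cells $\gamma$ from a 1-cell $A'\to B'$ to a 1-cell $A\to B$ satisfying $\gamma\star\alpha=\beta\star\gamma=\gamma$. Let $\mathbf U$, $\mathbf U'$ be the inclusions into $\mathbb{C}_{\alpha,\beta}$ of the full subcategories of $\mathbb{C}_v$ on 1-cells $A\to B$, respectively $A'\to B'$. For every 1-cell $f\colon A\to B$, $\nabla_{\alpha,\beta}(f)$ is a universal arrow from $\mathbf U'$ to $f$: a 1-cell $f{\downarrow_{\alpha,\beta}}\colon A'\to B'$ and a 2-cell $\nabla_{\alpha,\beta}(f)\colon f{\downarrow_{\alpha,\beta}}\to f$ in $\mathbb{C}_{\alpha,\beta}$ such that every arrow $h\to f$ of $\mathbb{C}_{\alpha,\beta}$ with $h\colon A'\to B'$ factors uniquely as $\nabla_{\alpha,\beta}(f)\circ\delta$ with $\delta\colon h\to f{\downarrow_{\alpha,\beta}}$. Dually, for every 1-cell $f'\colon A'\to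 B'$, $\triangle_{\alpha,\beta}(f')\colon f'\to f'{\uparrow^{\alpha,\beta}}$ (with $f'{\uparrow^{\alpha,\beta}}\colon A\to B$) is a universal arrow from $f'$ to $\mathbf U$. These satisfy $\nabla_{\mathrm{id}_{\mathrm{id}},\beta}(f)\star\nabla_{\alpha,\mathrm{id}_{\mathrm{id}}}(g)=\nabla_{\alpha,\beta}(f\circ g)$ and $\triangle_{\mathrm{id}_{\mathrm{id}},\beta}(f)\star\triangle_{\alpha,\mathrm{id}_{\mathrm{id}}}(g)=\triangle_{\alpha,\beta}(f\circ g)$ whenever typed, where $\mathrm{id}_{\mathrm{id}}$ denotes the identity 2-cell on the identity 1-cell of the appropriate 0-cell. Notation: $f{\downarrow_{\alpha,\beta}}$ is the domain (in $\mathbb{C}_v$) of $\nabla_{\alpha,\beta}(f)$ and $f{\uparrow^{\alpha,\beta}}$ the codomain of $\triangle_{\alpha,\beta}(f)$. *)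

theory Defs
  imports Main
begin

text \<open>A generalized 2-category, with explicit carrier sets.
  'o = 0-cells, 'a = 1-cells, 'c = 2-cells.
  comp1 g f is g o f (f first); vcomp b a is b o a (a first);
  hcomp b a is b \<star> a, for a : f1 -> g1, b : f2 -> g2, giving f2 o f1 -> g2 o g1.
  nabla K a b f is the 2-cell nabla_{a,b}(f), delta K a b f' the 2-cell triangle_{a,b}(f').\<close>

record ('o, 'a, 'c) gen2cat =
  Ob    :: "'o set"
  Ar    :: "'a set"
  dom1  :: "'a \<Rightarrow> 'o"
  cod1  :: "'a \<Rightarrow> 'o"
  comp1 :: "'a \<Rightarrow> 'a \<Rightarrow> 'a"
  id1   :: "'o \<Rightarrow> 'a"
  Cell  :: "'c set"
  src2  :: "'c \<Rightarrow> 'a"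
  tgt2  :: "'c \<Rightarrow> 'a"
  vcomp :: "'c \<Rightarrow> 'c \<Rightarrow> 'c"
  id2   :: "'a \<Rightarrow> 'c"
  hcomp :: "'c \<Rightarrow> 'c \<Rightarrow> 'c"
  nabla :: "'c \<Rightarrow> 'c \<Rightarrow> 'a \<Rightarrow> 'c"
  delta :: "'c \<Rightarrow> 'c \<Rightarrow> 'a \<Rightarrow> 'c"

definition hom1 :: "('o, 'a, 'c, 'm) gen2cat_scheme \<Rightarrow> 'o \<Rightarrow> 'o \<Rightarrow> 'a set" where
  "hom1 K A B = {f \<in> Ar K. dom1 K f = A \<and> cod1 K f = B}"

definition hcomposable :: "('o, 'a, 'c, 'm) gen2cat_scheme \<Rightarrow> 'c \<Rightarrow> 'c \<Rightarrow> bool" where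
  "hcomposable K b a \<longleftrightarrow> a \<in> Cell K \<and> b \<in> Cell K \<and>
     cod1 K (src2 K a) = dom1 K (src2 K b) \<and> cod1 K (tgt2 K a) = dom1 K (tgt2 K b)"

definition vcomposable :: "('o, 'a, 'c, 'm) gen2cat_scheme \<Rightarrow> 'c \<Rightarrow> 'c \<Rightarrow> bool" where
  "vcomposable K b a \<longleftrightarrow> a \<in> Cell K \<and> b \<in> Cell K \<and> tgt2 K a = src2 K b"

definition id_cell :: "('o, 'a, 'c, 'm) gen2cat_scheme \<Rightarrow> 'c \<Rightarrow> 'o \<Rightarrow> 'o \<Rightarrow> bool" where
  "id_cell K a A' A \<longleftrightarrow> A' \<in> Ob K \<and> A \<in> Ob K \<and> a \<in> Cell K \<and>
     src2 K a = id1 K A' \<and> tgt2 K a = id1 K A"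

definition arr_ab :: "('o, 'a, 'c, 'm) gen2cat_scheme \<Rightarrow> 'c \<Rightarrow> 'c \<Rightarrow> 'o \<Rightarrow> 'o \<Rightarrow> 'o \<Rightarrow> 'o \<Rightarrow> 'c \<Rightarrow> bool" where
  "arr_ab K a b A' A B' B c \<longleftrightarrow> c \<in> Cell K \<and>
     ((src2 K c \<in> hom1 K A B \<and> tgt2 K c \<in> hom1 K A B) \<or>
      (src2 K c \<in> hom1 K A' B' \<and> tgt2 K c \<in> hom1 K A' B') \<or>
      (src2 K c \<in> hom1 K A' B' \<and> tgt2 K c \<in> hom1 K A B \<and>
       hcomp K c a = c \<and> hcomp K b c = c))"

definition gen2cat :: "('o, 'a, 'c, 'm) gen2cat_scheme \<Rightarrow> bool" where
  "gen2cat K \<longleftrightarrow>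
   \<comment> \<open>(i) the category C_1\<close>
   (\<forall>f \<in> Ar K. dom1 K f \<in> Ob K \<and> cod1 K f \<in> Ob K) \<and>
   (\<forall>A \<in> Ob K. id1 K A \<in> hom1 K A A) \<and>
   (\<forall>f \<in> Ar K. \<forall>g \<in> Ar K. cod1 K f = dom1 K g \<longrightarrow>
      comp1 K g f \<in> hom1 K (dom1 K f) (cod1 K g)) \<and>
   (\<forall>f \<in> Ar K. \<forall>g \<in> Ar K. \<forall>h \<in> Ar K. cod1 K f = dom1 K g \<longrightarrow> cod1 K g = dom1 K h \<longrightarrow>
      comp1 K h (comp1 K g f) = comp1 K (comp1 K h g) f) \<and>
   (\<forall>f \<in> Ar K. comp1 K f (id1 K (dom1 K f)) = f \<and> comp1 K (id1 K (cod1 K f)) f = f) \<and>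
   \<comment> \<open>(ii) the category C_v\<close>
   (\<forall>c \<in> Cell K. src2 K c \<in> Ar K \<and> tgt2 K c \<in> Ar K) \<and>
   (\<forall>f \<in> Ar K. id2 K f \<in> Cell K \<and> src2 K (id2 K f) = f \<and> tgt2 K (id2 K f) = f) \<and>
   (\<forall>a b. vcomposable K b a \<longrightarrow>
      vcomp K b a \<in> Cell K \<and> src2 K (vcomp K b a) = src2 K a \<and> tgt2 K (vcomp K b a) = tgt2 K b) \<and>
   (\<forall>a b c. vcomposable K b a \<longrightarrow> vcomposable K c b \<longrightarrow>
      vcomp K c (vcomp K b a) = vcomp K (vcomp K c b) a) \<and>
   (\<forall>a \<in> Cell K. vcomp K a (id2 K (src2 K a)) = a \<and> vcomp K (id2 K (tgt2 K a)) a = a) \<and>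
   \<comment> \<open>(iii) horizontal composition\<close>
   (\<forall>a b. hcomposable K b a \<longrightarrow>
      hcomp K b a \<in> Cell K \<and>
      src2 K (hcomp K b a) = comp1 K (src2 K b) (src2 K a) \<and>
      tgt2 K (hcomp K b a) = comp1 K (tgt2 K b) (tgt2 K a)) \<and>
   (\<forall>a b c. hcomposable K b a \<longrightarrow> hcomposable K c b \<longrightarrow>
      hcomp K c (hcomp K b a) = hcomp K (hcomp K c b) a) \<and>
   (\<forall>a1 a2 b1 b2. hcomposable K a1 b1 \<longrightarrow> hcomposable K a2 b2 \<longrightarrow>
      vcomposable K a2 a1 \<longrightarrow> vcomposable K b2 b1 \<longrightarrow>
      vcomp K (hcomp K a2 b2) (hcomp K a1 b1) = hcomp K (vcomp K a2 a1) (vcomp K b2 b1)) \<and>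
   \<comment> \<open>(iv) nabla: universal arrows from U' to f\<close>
   (\<forall>a b A' A B' B. id_cell K a A' A \<longrightarrow> id_cell K b B' B \<longrightarrow>
      (\<forall>f \<in> hom1 K A B.
        arr_ab K a b A' A B' B (nabla K a b f) \<and>
        tgt2 K (nabla K a b f) = f \<and> src2 K (nabla K a b f) \<in> hom1 K A' B' \<and>
        (\<forall>t. arr_ab K a b A' A B' B t \<longrightarrow> tgt2 K t = f \<longrightarrow> src2 K t \<in> hom1 K A' B' \<longrightarrow>
           (\<exists>!d. d \<in> Cell K \<and> src2 K d = src2 K t \<and> tgt2 K d = src2 K (nabla K a b f) \<and>
                 vcomp K (nabla K a b f) d = t)))) \<and>
   \<comment> \<open>(iv) triangle: universal arrows from f' to U\<close>
   (\<forall>a b A' A B' B. id_cell K a A' A \<longrightarrow> id_cell K b B' B \<longrightarrow>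
      (\<forall>f \<in> hom1 K A' B'.
        arr_ab K a b A' A B' B (delta K a b f) \<and>
        src2 K (delta K a b f) = f \<and> tgt2 K (delta K a b f) \<in> hom1 K A B \<and>
        (\<forall>t. arr_ab K a b A' A B' B t \<longrightarrow> src2 K t = f \<longrightarrow> tgt2 K t \<in> hom1 K A B \<longrightarrow>
           (\<exists>!d. d \<in> Cell K \<and> src2 K d = tgt2 K (delta K a b f) \<and> tgt2 K d = tgt2 K t \<and>
                 vcomp K d (delta K a b f) = t)))) \<and>
   \<comment> \<open>compatibility of nabla and triangle with composition of 1-cells\<close>
   (\<forall>a b A' A X B' B f g. id_cell K a A' A \<longrightarrow> id_cell K b B' B \<longrightarrow> X \<in> Ob K \<longrightarrow>
      g \<in> hom1 K A X \<longrightarrow> f \<in> hom1 K X B \<longrightarrow>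
      hcomp K (nabla K (id2 K (id1 K X)) b f) (nabla K a (id2 K (id1 K X)) g)
        = nabla K a b (comp1 K f g)) \<and>
   (\<forall>a b A' A X B' B f g. id_cell K a A' A \<longrightarrow> id_cell K b B' B \<longrightarrow> X \<in> Ob K \<longrightarrow>
      g \<in> hom1 K A' X \<longrightarrow> f \<in> hom1 K X B' \<longrightarrow>
      hcomp K (delta K (id2 K (id1 K X)) b f) (delta K a (id2 K (id1 K X)) g)
        = delta K a b (comp1 K f g))"

definition down :: "('o, 'a, 'c, 'm) gen2cat_scheme \<Rightarrow> 'c \<Rightarrow> 'c \<Rightarrow> 'a \<Rightarrow> 'a" where
  "down K a b f = src2 K (nabla K a b f)"

definition up :: "('o, 'a, 'c, 'm) gen2cat_scheme \<Rightarrow> 'c \<Rightarrow> 'c \<Rightarrow> 'a \<Rightarrow> 'a" where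
  "up K a b f = tgt2 K (delta K a b f)"

end

theory Submission
  imports Defs
begin

(* Write \<iota>X for the identity 2-cell on id_X.  The compatibility axiom
   for \<nabla> says that f\<down>[\<alpha>,\<beta>] factors through the intermediate 0-cell of any
   decomposition of f:  (g \<circ> f)\<down>[\<alpha>,\<beta>] = g\<down>[\<iota>X,\<beta>] \<circ> f\<down>[\<alpha>,\<iota>X].
   Applying this to f = id_B \<circ> f, g = g \<circ> id_B and g \<circ> f gives, with
   p = id_B\<down>[\<iota>B,\<beta>], q = id_B\<down>[\<beta>,\<iota>B], f1 = f\<down>[\<alpha>,\<iota>B], g1 = g\<down>[\<iota>B,\<gamma>],
     g\<down>[\<beta>,\<gamma>] \<circ> f\<down>[\<alpha>,\<beta>] = g1 \<circ> (q \<circ> p) \<circ> f1   and   (g \<circ> f)\<down>[\<alpha>,\<gamma>] = g1 \<circ> f1.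
   The horizontal composite of the two universal 2-cells \<nabla>(id_B) is a 2-cell
   q \<circ> p \<Rightarrow> id_B, and whiskering it by f1 and g1 yields the required 2-cell.
   The statement for \<up> is exactly dual, using \<triangle> (a 2-cell id_B' \<Rightarrow> q \<circ> p). *)

definition twocell :: "('o, 'a, 'c, 'm) gen2cat_scheme \<Rightarrow> 'c \<Rightarrow> 'a \<Rightarrow> 'a \<Rightarrow> bool" where
  "twocell K \<theta> u v \<longleftrightarrow> \<theta> \<in> Cell K \<and> src2 K \<theta> = u \<and> tgt2 K \<theta> = v"

locale generalized_2_category =
  fixes K :: "('o, 'a, 'c, 'm) gen2cat_scheme"
  assumes gen2cat: "gen2cat K"
begin

abbreviation idid :: "'o \<Rightarrow> 'c" where
  "idid X \<equiv> id2 K (id1 K X)"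

lemma hom_Ar: "f \<in> hom1 K A B \<Longrightarrow> f \<in> Ar K"
  by (simp add: hom1_def)

lemma hom_cod_Ob: "f \<in> hom1 K A B \<Longrightarrow> B \<in> Ob K"
proof -
  have "\<forall>f \<in> Ar K. dom1 K f \<in> Ob K \<and> cod1 K f \<in> Ob K"
    using gen2cat unfolding gen2cat_def by (elim conjE) assumption
  then show "f \<in> hom1 K A B \<Longrightarrow> B \<in> Ob K"
    unfolding hom1_def by auto
qed

lemma id_hom: "A \<in> Ob K \<Longrightarrow> id1 K A \<in> hom1 K A A"
  using gen2cat unfolding gen2cat_def by (elim conjE) blast

lemma comp_hom: "f \<in> hom1 K A B \<Longrightarrow> g \<in> hom1 K B C \<Longrightarrow> comp1 K g f \<in> hom1 K A C"
proof -
  have "\<forall>f \<in> Ar K. \<forall>g \<in> Ar K. cod1 K f = dom1 K g \<longrightarrow>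
      comp1 K g f \<in> hom1 K (dom1 K f) (cod1 K g)"
    using gen2cat unfolding gen2cat_def by (elim conjE) assumption
  then show "f \<in> hom1 K A B \<Longrightarrow> g \<in> hom1 K B C \<Longrightarrow> comp1 K g f \<in> hom1 K A C"
    unfolding hom1_def by auto
qed

lemma comp_assoc:
  "f \<in> hom1 K A B \<Longrightarrow> g \<in> hom1 K B C \<Longrightarrow> h \<in> hom1 K C D \<Longrightarrow>
   comp1 K h (comp1 K g f) = comp1 K (comp1 K h g) f"
proof -
  have "\<forall>f \<in> Ar K. \<forall>g \<in> Ar K. \<forall>h \<in> Ar K. cod1 K f = dom1 K g \<longrightarrow> cod1 K g = dom1 K h \<longrightarrow>
      comp1 K h (comp1 K g f) = comp1 K (comp1 K h g) f"
    using gen2cat unfolding gen2cat_def by (elim conjE) assumption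
  then show "f \<in> hom1 K A B \<Longrightarrow> g \<in> hom1 K B C \<Longrightarrow> h \<in> hom1 K C D \<Longrightarrow>
      comp1 K h (comp1 K g f) = comp1 K (comp1 K h g) f"
    unfolding hom1_def by auto
qed

lemma comp_id:
  assumes "f \<in> hom1 K A B"
  shows comp_id_left: "comp1 K (id1 K B) f = f" and comp_id_right: "comp1 K f (id1 K A) = f"
proof -
  have "\<forall>f \<in> Ar K. comp1 K f (id1 K (dom1 K f)) = f \<and> comp1 K (id1 K (cod1 K f)) f = f"
    using gen2cat unfolding gen2cat_def by (elim conjE) assumption
  then show "comp1 K (id1 K B) f = f" and "comp1 K f (id1 K A) = f"
    using assms unfolding hom1_def by auto
qed

lemma id2_twocell: "f \<in> Ar K \<Longrightarrow> twocell K (id2 K f) f f"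
  using gen2cat unfolding gen2cat_def twocell_def by (elim conjE) blast

lemma id_cell_idid: "X \<in> Ob K \<Longrightarrow> id_cell K (idid X) X X"
  using id_hom[of X] id2_twocell[of "id1 K X"]
  unfolding id_cell_def twocell_def hom1_def by auto

lemma hcomp_twocell:
  assumes "twocell K \<theta> u v" and "twocell K \<eta> u' v'"
    and "u \<in> hom1 K X Y" and "u' \<in> hom1 K Y Z"
    and "v \<in> hom1 K X' Y'" and "v' \<in> hom1 K Y' Z'"
  shows "twocell K (hcomp K \<eta> \<theta>) (comp1 K u' u) (comp1 K v' v)"
proof -
  have "\<forall>a b. hcomposable K b a \<longrightarrow>
      hcomp K b a \<in> Cell K \<and>
      src2 K (hcomp K b a) = comp1 K (src2 K b) (src2 K a) \<and>
      tgt2 K (hcomp K b a) = comp1 K (tgt2 K b) (tgt2 K a)"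
    using gen2cat unfolding gen2cat_def by (elim conjE) assumption
  moreover have "hcomposable K \<eta> \<theta>"
    using assms unfolding hcomposable_def twocell_def hom1_def by auto
  ultimately show ?thesis
    using assms(1,2) unfolding twocell_def by auto
qed

lemma whisker_twocell:
  assumes "twocell K \<theta> u v" and "u \<in> hom1 K X Y" and "v \<in> hom1 K X Y"
    and "f \<in> hom1 K A X" and "g \<in> hom1 K Y C"
  shows "twocell K (hcomp K (id2 K g) (hcomp K \<theta> (id2 K f)))
           (comp1 K g (comp1 K u f)) (comp1 K g (comp1 K v f))"
proof -
  have right: "twocell K (hcomp K \<theta> (id2 K f)) (comp1 K u f) (comp1 K v f)"
    using hcomp_twocell[OF id2_twocell[OF hom_Ar] assms(1)] assms(2-4) by blast
  show ?thesis
    using hcomp_twocell[OF right id2_twocell[OF hom_Ar]] comp_hom assms(2-5) by blast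
qed

lemma nabla_twocell:
  assumes "id_cell K a A' A" and "id_cell K b B' B" and "f \<in> hom1 K A B"
  shows "twocell K (nabla K a b f) (down K a b f) f \<and> down K a b f \<in> hom1 K A' B'"
proof -
  have "\<forall>a b A' A B' B. id_cell K a A' A \<longrightarrow> id_cell K b B' B \<longrightarrow>
      (\<forall>f \<in> hom1 K A B.
        arr_ab K a b A' A B' B (nabla K a b f) \<and>
        tgt2 K (nabla K a b f) = f \<and> src2 K (nabla K a b f) \<in> hom1 K A' B' \<and>
        (\<forall>t. arr_ab K a b A' A B' B t \<longrightarrow> tgt2 K t = f \<longrightarrow> src2 K t \<in> hom1 K A' B' \<longrightarrow>
           (\<exists>!d. d \<in> Cell K \<and> src2 K d = src2 K t \<and> tgt2 K d = src2 K (nabla K a b f) \<and>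
                 vcomp K (nabla K a b f) d = t)))"
    using gen2cat unfolding gen2cat_def by (elim conjE) assumption
  then show ?thesis
    using assms unfolding twocell_def down_def arr_ab_def by blast
qed

lemma delta_twocell:
  assumes "id_cell K a A' A" and "id_cell K b B' B" and "f \<in> hom1 K A' B'"
  shows "twocell K (delta K a b f) f (up K a b f) \<and> up K a b f \<in> hom1 K A B"
proof -
  have "\<forall>a b A' A B' B. id_cell K a A' A \<longrightarrow> id_cell K b B' B \<longrightarrow>
      (\<forall>f \<in> hom1 K A' B'.
        arr_ab K a b A' A B' B (delta K a b f) \<and>
        src2 K (delta K a b f) = f \<and> tgt2 K (delta K a b f) \<in> hom1 K A B \<and>
        (\<forall>t. arr_ab K a b A' A B' B t \<longrightarrow> src2 K t = f \<longrightarrow> tgt2 K t \<in> hom1 K A B \<longrightarrow>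
           (\<exists>!d. d \<in> Cell K \<and> src2 K d = tgt2 K (delta K a b f) \<and> tgt2 K d = tgt2 K t \<and>
                 vcomp K d (delta K a b f) = t)))"
    using gen2cat unfolding gen2cat_def by (elim conjE) assumption
  then show ?thesis
    using assms unfolding twocell_def up_def arr_ab_def by blast
qed

lemma down_comp:
  assumes a: "id_cell K a A' A" and b: "id_cell K b B' B"
    and f: "f \<in> hom1 K A X" and g: "g \<in> hom1 K X B"
  shows "down K a b (comp1 K g f) = comp1 K (down K (idid X) b g) (down K a (idid X) f)"
proof -
  have X: "id_cell K (idid X) X X" using id_cell_idid[OF hom_cod_Ob[OF f]] .
  have "\<forall>a b A' A X B' B f g. id_cell K a A' A \<longrightarrow> id_cell K b B' B \<longrightarrow> X \<in> Ob K \<longrightarrow>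
      g \<in> hom1 K A X \<longrightarrow> f \<in> hom1 K X B \<longrightarrow>
      hcomp K (nabla K (idid X) b f) (nabla K a (idid X) g) = nabla K a b (comp1 K f g)"
    using gen2cat unfolding gen2cat_def by (elim conjE) assumption
  then have "hcomp K (nabla K (idid X) b g) (nabla K a (idid X) f) = nabla K a b (comp1 K g f)"
    using a b f g hom_cod_Ob[OF f] by blast
  moreover have "twocell K (hcomp K (nabla K (idid X) b g) (nabla K a (idid X) f))
      (comp1 K (down K (idid X) b g) (down K a (idid X) f)) (comp1 K g f)"
    using hcomp_twocell nabla_twocell[OF a X f] nabla_twocell[OF X b g] f g by blast
  ultimately show ?thesis
    using nabla_twocell[OF a b comp_hom[OF f g]] by (simp add: twocell_def)
qed

lemma up_comp:
  assumes a: "id_cell K a A' A" and b: "id_cell K b B' B"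
    and f: "f \<in> hom1 K A' X" and g: "g \<in> hom1 K X B'"
  shows "up K a b (comp1 K g f) = comp1 K (up K (idid X) b g) (up K a (idid X) f)"
proof -
  have X: "id_cell K (idid X) X X" using id_cell_idid[OF hom_cod_Ob[OF f]] .
  have "\<forall>a b A' A X B' B f g. id_cell K a A' A \<longrightarrow> id_cell K b B' B \<longrightarrow> X \<in> Ob K \<longrightarrow>
      g \<in> hom1 K A' X \<longrightarrow> f \<in> hom1 K X B' \<longrightarrow>
      hcomp K (delta K (idid X) b f) (delta K a (idid X) g) = delta K a b (comp1 K f g)"
    using gen2cat unfolding gen2cat_def by (elim conjE) assumption
  then have "hcomp K (delta K (idid X) b g) (delta K a (idid X) f) = delta K a b (comp1 K g f)"
    using a b f g hom_cod_Ob[OF f] by blast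
  moreover have "twocell K (hcomp K (delta K (idid X) b g) (delta K a (idid X) f))
      (comp1 K g f) (comp1 K (up K (idid X) b g) (up K a (idid X) f))"
    using hcomp_twocell delta_twocell[OF a X f] delta_twocell[OF X b g] f g by blast
  ultimately show ?thesis
    using delta_twocell[OF a b comp_hom[OF f g]] by (simp add: twocell_def)
qed

lemma comp_regroup:
  assumes "f \<in> hom1 K A X" and "p \<in> hom1 K X Y" and "q \<in> hom1 K Y X" and "g \<in> hom1 K X C"
  shows "comp1 K (comp1 K g q) (comp1 K p f) = comp1 K g (comp1 K (comp1 K q p) f)"
proof -
  have "comp1 K (comp1 K g q) (comp1 K p f) = comp1 K g (comp1 K q (comp1 K p f))"
    using comp_assoc[OF comp_hom[OF assms(1,2)] assms(3,4)] by simp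
  also have "\<dots> = comp1 K g (comp1 K (comp1 K q p) f)"
    using comp_assoc[OF assms(1-3)] by simp
  finally show ?thesis .
qed

lemma down_comparison:
  assumes \<alpha>: "id_cell K \<alpha> A' A" and \<beta>: "id_cell K \<beta> B' B" and \<gamma>: "id_cell K \<gamma> C' C"
    and f: "f \<in> hom1 K A B" and g: "g \<in> hom1 K B C"
  shows "\<exists>\<theta>. twocell K \<theta> (comp1 K (down K \<beta> \<gamma> g) (down K \<alpha> \<beta> f))
                            (down K \<alpha> \<gamma> (comp1 K g f))"
proof -
  have \<iota>: "id_cell K (idid B) B B" and idB: "id1 K B \<in> hom1 K B B"
    using id_cell_idid id_hom hom_cod_Ob[OF f] by auto
  define p where "p = down K (idid B) \<beta> (id1 K B)"
  define q where "q = down K \<beta> (idid B) (id1 K B)"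
  define f1 where "f1 = down K \<alpha> (idid B) f"
  define g1 where "g1 = down K (idid B) \<gamma> g"
  have p: "p \<in> hom1 K B B'" and q: "q \<in> hom1 K B' B"
    and f1: "f1 \<in> hom1 K A' B" and g1: "g1 \<in> hom1 K B C'"
    using nabla_twocell \<alpha> \<beta> \<gamma> \<iota> f g idB unfolding p_def q_def f1_def g1_def by blast+
  have down_f: "down K \<alpha> \<beta> f = comp1 K p f1"
    using down_comp[OF \<alpha> \<beta> f idB] comp_id_left[OF f] unfolding p_def f1_def by simp
  have down_g: "down K \<beta> \<gamma> g = comp1 K g1 q"
    using down_comp[OF \<beta> \<gamma> idB g] comp_id_right[OF g] unfolding q_def g1_def by simp
  have down_gf: "down K \<alpha> \<gamma> (comp1 K g f) = comp1 K g1 (comp1 K (id1 K B) f1)"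
    using down_comp[OF \<alpha> \<gamma> f g] comp_id_left[OF f1] unfolding f1_def g1_def by simp
  have "twocell K (hcomp K (nabla K \<beta> (idid B) (id1 K B)) (nabla K (idid B) \<beta> (id1 K B)))
          (comp1 K q p) (id1 K B)"
    using hcomp_twocell nabla_twocell[OF \<iota> \<beta> idB] nabla_twocell[OF \<beta> \<iota> idB]
      comp_id_left[OF idB] idB unfolding p_def q_def by metis
  then show ?thesis
    using whisker_twocell comp_hom[OF p q] idB f1 g1
    unfolding down_f down_g down_gf comp_regroup[OF f1 p q g1] by blast
qed

lemma up_comparison:
  assumes \<alpha>: "id_cell K \<alpha> A' A" and \<beta>: "id_cell K \<beta> B' B" and \<gamma>: "id_cell K \<gamma> C' C"
    and f: "f \<in> hom1 K A' B'" and g: "g \<in> hom1 K B' C'"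
  shows "\<exists>\<theta>. twocell K \<theta> (up K \<alpha> \<gamma> (comp1 K g f))
                            (comp1 K (up K \<beta> \<gamma> g) (up K \<alpha> \<beta> f))"
proof -
  have \<iota>: "id_cell K (idid B') B' B'" and idB: "id1 K B' \<in> hom1 K B' B'"
    using id_cell_idid id_hom hom_cod_Ob[OF f] by auto
  define p where "p = up K (idid B') \<beta> (id1 K B')"
  define q where "q = up K \<beta> (idid B') (id1 K B')"
  define f1 where "f1 = up K \<alpha> (idid B') f"
  define g1 where "g1 = up K (idid B') \<gamma> g"
  have p: "p \<in> hom1 K B' B" and q: "q \<in> hom1 K B B'"
    and f1: "f1 \<in> hom1 K A B'" and g1: "g1 \<in> hom1 K B' C"
    using delta_twocell \<alpha> \<beta> \<gamma> \<iota> f g idB unfolding p_def q_def f1_def g1_def by blast+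
  have up_f: "up K \<alpha> \<beta> f = comp1 K p f1"
    using up_comp[OF \<alpha> \<beta> f idB] comp_id_left[OF f] unfolding p_def f1_def by simp
  have up_g: "up K \<beta> \<gamma> g = comp1 K g1 q"
    using up_comp[OF \<beta> \<gamma> idB g] comp_id_right[OF g] unfolding q_def g1_def by simp
  have up_gf: "up K \<alpha> \<gamma> (comp1 K g f) = comp1 K g1 (comp1 K (id1 K B') f1)"
    using up_comp[OF \<alpha> \<gamma> f g] comp_id_left[OF f1] unfolding f1_def g1_def by simp
  have "twocell K (hcomp K (delta K \<beta> (idid B') (id1 K B')) (delta K (idid B') \<beta> (id1 K B')))
          (id1 K B') (comp1 K q p)"
    using hcomp_twocell delta_twocell[OF \<iota> \<beta> idB] delta_twocell[OF \<beta> \<iota> idB]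
      comp_id_left[OF idB] idB unfolding p_def q_def by metis
  then show ?thesis
    using whisker_twocell comp_hom[OF p q] idB f1 g1
    unfolding up_f up_g up_gf comp_regroup[OF f1 p q g1] by blast
qed

end

theorem proposition1:
  fixes K :: "('o, 'a, 'c, 'm) gen2cat_scheme"
  assumes "gen2cat K"
    and "id_cell K \<alpha> A' A" and "id_cell K \<beta> B' B" and "id_cell K \<gamma> C' C"
    and "f \<in> hom1 K A B" and "g \<in> hom1 K B C"
    and "f' \<in> hom1 K A' B'" and "g' \<in> hom1 K B' C'"
  shows "(\<exists>\<theta> \<in> Cell K. src2 K \<theta> = comp1 K (down K \<beta> \<gamma> g) (down K \<alpha> \<beta> f) \<and>
                       tgt2 K \<theta> = down K \<alpha> \<gamma> (comp1 K g f))
       \<and> (\<exists>\<theta> \<in> Cell K. src2 K \<theta> = up K \<alpha> \<gamma> (comp1 K g' f') \<and>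
                       tgt2 K \<theta> = comp1 K (up K \<beta> \<gamma> g') (up K \<alpha> \<beta> f'))"
proof -
  interpret generalized_2_category K by unfold_locales (rule assms(1))
  show ?thesis
    using down_comparison[OF assms(2-6)] up_comparison[OF assms(2-4,7,8)]
    unfolding twocell_def by blast
qed

end
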